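(* Let $M$ be a commutative von Neumann algebra with a faithful normal finite trace $\tau$, let $\Lambda$ be a quadratic family of Young functions, and let $\delta:L^{\Lambda}(M,\tau)\to L^{\Lambda}(M,\tau)$ be a nonzero additive derivation. Then there exists a sequence $(a_n)_{n\ge1}$ in $M$ with $|a_n|\le\mathbf 1$ for all $n$ such that $|\delta(a_n)|\ge n\,z_\delta$ for all $n\in\mathbb N$.
   Context: Notation for generalized Arens algebras: for a von Neumann algebra $N$ with faithful normal trace $\tau$, $S(N,\tau)$ is the *-algebra of $\tau$-measurable operators affiliated with $N$. A Young function is $\phi(t)=\int_0^t\varphi(s)ds$ with $\varphi\ge0$ right continuous, nondecreasing, $\varphi(0)=0$, $\varphi(s)>0$ for $s>0$, $\varphi(s)\to\infty$. $L_\phi(N,\tau)=\bigcup_n n\{x\in S(N,\tau):\tau(\phi(|x|))\le1\}$. $\phi_1\prec\phi_2$ means $\phi_1(t)\le\phi_2(ct)$ for $t\ge T$, some $c,T\ge 0$. A family $\Lambda$ is quadratic if any two members are $\prec$ some member and for each $\phi\in\Lambda$ there are $\psi\in\Lambda$, $c>0,T\ge0$ with $\phi(t^2)\le\psi(ct)$ for $t\ge T$. $L^\Lambda(N,\tau)=\bigcap_{\phi\in\Lambda}L_\phi(N,\tau)$. An additive derivation is an additive map $\delta$ with $\delta(xy)=\delta(x)y+x\delta(y)$. For an additive derivation $\delta$ on $L^\Lambda(M,\tau)$ ($M$ commutative), its support is $z_\delta=\inf\{z\in P(M): z\delta=\delta\}$, where $P(M)$ is the projection lattice and $(z\delta)(x)=z\delta(x)$.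 Inequalities are in the order of self-adjoint elements of $S(M,\tau)$. *)

theory Defs
  imports "HOL-Analysis.Analysis"
begin

text \<open>A commutative von Neumann algebra M with faithful normal finite trace is modelled
  as L-infinity of a finite measure space (the trace being integration).  Elements of
  S(M,tau) = L0 are represented by measurable complex functions, identified up to a.e.
  equality.\<close>

definition young_function :: "(real \<Rightarrow> real) \<Rightarrow> bool" where
  "young_function \<phi> \<longleftrightarrow>
     (\<exists>\<phi>'. (\<forall>s\<ge>0. \<phi>' s \<ge> 0) \<and> (\<forall>s\<ge>0. continuous (at_right s) \<phi>')
        \<and> mono_on {0..} \<phi>' \<and> \<phi>' 0 = 0 \<and> (\<forall>s>0. \<phi>' s > 0)
        \<and> filterlim \<phi>' at_top at_top
        \<and> (\<forall>t\<ge>0. \<phi> t = integral {0..t} \<phi>'))"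

definition young_prec :: "(real \<Rightarrow> real) \<Rightarrow> (real \<Rightarrow> real) \<Rightarrow> bool" where
  "young_prec \<phi>1 \<phi>2 \<longleftrightarrow> (\<exists>c\<ge>0. \<exists>T\<ge>0. \<forall>t\<ge>T. \<phi>1 t \<le> \<phi>2 (c * t))"

definition quadratic_family :: "(real \<Rightarrow> real) set \<Rightarrow> bool" where
  "quadratic_family \<Lambda> \<longleftrightarrow>
     (\<forall>\<phi>\<in>\<Lambda>. young_function \<phi>)
   \<and> (\<forall>\<phi>1\<in>\<Lambda>. \<forall>\<phi>2\<in>\<Lambda>. \<exists>\<phi>\<in>\<Lambda>. young_prec \<phi>1 \<phi> \<and> young_prec \<phi>2 \<phi>)
   \<and> (\<forall>\<phi>\<in>\<Lambda>. \<exists>\<psi>\<in>\<Lambda>. \<exists>c>0. \<exists>T\<ge>0. \<forall>t\<ge>T. \<phi> (t\<^sup>2) \<le> \<psi> (c * t))"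

definition orlicz :: "'a measure \<Rightarrow> (real \<Rightarrow> real) \<Rightarrow> ('a \<Rightarrow> complex) set" where
  "orlicz M \<phi> = {x \<in> borel_measurable M.
     \<exists>n::nat. n > 0 \<and> (\<integral>\<^sup>+ \<omega>. ennreal (\<phi> (cmod (x \<omega>) / real n)) \<partial>M) \<le> 1}"

definition gen_arens :: "'a measure \<Rightarrow> (real \<Rightarrow> real) set \<Rightarrow> ('a \<Rightarrow> complex) set" where
  "gen_arens M \<Lambda> = {x \<in> borel_measurable M. \<forall>\<phi>\<in>\<Lambda>. x \<in> orlicz M \<phi>}"

text \<open>Additive derivation on L^Lambda, as a map on representatives compatible with a.e. equality.\<close>
definition additive_derivation ::
  "'a measure \<Rightarrow> ('a \<Rightarrow> complex) set \<Rightarrow> (('a \<Rightarrow> complex) \<Rightarrow> ('a \<Rightarrow> complex)) \<Rightarrow> bool" where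
  "additive_derivation M L \<delta> \<longleftrightarrow>
     (\<forall>x\<in>L. \<delta> x \<in> L)
   \<and> (\<forall>x\<in>L. \<forall>y\<in>L. (AE \<omega> in M. x \<omega> = y \<omega>) \<longrightarrow> (AE \<omega> in M. \<delta> x \<omega> = \<delta> y \<omega>))
   \<and> (\<forall>x\<in>L. \<forall>y\<in>L. AE \<omega> in M. \<delta> (\<lambda>\<omega>. x \<omega> + y \<omega>) \<omega> = \<delta> x \<omega> + \<delta> y \<omega>)
   \<and> (\<forall>x\<in>L. \<forall>y\<in>L. AE \<omega> in M. \<delta> (\<lambda>\<omega>. x \<omega> * y \<omega>) \<omega> = \<delta> x \<omega> * y \<omega> + x \<omega> * \<delta> y \<omega>)"

text \<open>Projections of M = indicators of measurable sets (mod null sets).  The projections z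
  with z delta = delta:\<close>
definition fixing_projs ::
  "'a measure \<Rightarrow> ('a \<Rightarrow> complex) set \<Rightarrow> (('a \<Rightarrow> complex) \<Rightarrow> ('a \<Rightarrow> complex)) \<Rightarrow> 'a set set" where
  "fixing_projs M L \<delta> = {E \<in> sets M. \<forall>x\<in>L. AE \<omega> in M. indicator E \<omega> * \<delta> x \<omega> = \<delta> x \<omega>}"

definition is_proj_inf :: "'a measure \<Rightarrow> 'a set set \<Rightarrow> 'a set \<Rightarrow> bool" where
  "is_proj_inf M Z E \<longleftrightarrow> E \<in> sets M
     \<and> (\<forall>F\<in>Z. AE \<omega> in M. \<omega> \<in> E \<longrightarrow> \<omega> \<in> F)
     \<and> (\<forall>G\<in>sets M. (\<forall>F\<in>Z. AE \<omega> in M. \<omega> \<in> G \<longrightarrow> \<omega> \<in> F) \<longrightarrow> (AE \<omega> in M. \<omega> \<in> G \<longrightarrow> \<omega> \<in> E))"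

end

theory Submission
  imports Defs
begin

text \<open>
  The derivation \<delta> annihilates idempotents, hence is local (\<delta>(1_D x) = 1_D \<delta> x), and by
  additivity it annihilates the Gaussian rational constants; so it kills step functions with
  countably many Gaussian rational values.  A bounded a differs from such a step function by a
  function of sup norm at most 1/k, whose image under \<delta> is 1/k times that of an element of the
  unit ball.  Consequently, if |\<delta> a| \<le> n on a set B for the whole unit ball, then \<delta> vanishes
  on B for bounded arguments, and by truncation for all arguments.

  The sets on which some a in the unit ball has |\<delta> a| \<ge> n are closed under countable unions
  (glue the witnesses along a partition), so in a finite measure space there is a largest one, U,
  up to null sets.  Off U every a in the unit ball has |\<delta> a| \<le> n, so \<delta> vanishes off U: U is a
  projection fixing \<delta>, hence contains the support z_\<delta>, and its witness is the required a_n.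
\<close>

section \<open>Bounded measurable functions\<close>

lemma young_function_le_linear:
  assumes "young_function \<phi>"
  obtains K where "K \<ge> 0" "\<And>t. 0 \<le> t \<Longrightarrow> t \<le> 1 \<Longrightarrow> 0 \<le> \<phi> t \<and> \<phi> t \<le> K * t"
proof -
  obtain p where p: "\<forall>s\<ge>0. p s \<ge> 0" "mono_on {0..} p" "\<forall>t\<ge>0. \<phi> t = integral {0..t} p"
    using assms unfolding young_function_def by blast
  have "0 \<le> p 1" using p by auto
  moreover have "0 \<le> \<phi> t \<and> \<phi> t \<le> p 1 * t" if "0 \<le> t" "t \<le> 1" for t
  proof (cases "p integrable_on {0..t}")
    case True
    have "integral {0..t} p \<le> integral {0..t} (\<lambda>_. p 1)"
      using True that p(2) by (intro integral_le) (auto simp: mono_on_def)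
    moreover have "0 \<le> integral {0..t} p" using True p(1) by (intro integral_nonneg) auto
    ultimately show ?thesis using p(3) that by (auto simp: mult.commute)
  next
    case False
    then have "integral {0..t} p = 0" by (rule not_integrable_integral)
    then show ?thesis using p(3) that \<open>0 \<le> p 1\<close> by auto
  qed
  ultimately show ?thesis using that by blast
qed

definition bounded_measurable :: "'a measure \<Rightarrow> ('a \<Rightarrow> complex) \<Rightarrow> bool" where
  "bounded_measurable M x \<longleftrightarrow> x \<in> borel_measurable M \<and> (\<exists>C. \<forall>\<omega>\<in>space M. cmod (x \<omega>) \<le> C)"

definition unit_ball :: "'a measure \<Rightarrow> ('a \<Rightarrow> complex) set" where
  "unit_ball M = {a \<in> borel_measurable M. \<forall>\<omega>\<in>space M. cmod (a \<omega>) \<le> 1}"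

lemma bounded_measurableI:
  "x \<in> borel_measurable M \<Longrightarrow> (\<And>\<omega>. \<omega> \<in> space M \<Longrightarrow> cmod (x \<omega>) \<le> C) \<Longrightarrow> bounded_measurable M x"
  unfolding bounded_measurable_def by auto

lemma bounded_measurable_measurable: "bounded_measurable M x \<Longrightarrow> x \<in> borel_measurable M"
  unfolding bounded_measurable_def by auto

lemma bounded_measurable_const: "bounded_measurable M (\<lambda>_. c)"
  by (rule bounded_measurableI[where C="cmod c"]) auto

lemma bounded_measurable_indicator: "D \<in> sets M \<Longrightarrow> bounded_measurable M (indicator D)"
  by (rule bounded_measurableI[where C=1]) (auto simp: indicator_def)

lemma unit_ball_bounded_measurable: "a \<in> unit_ball M \<Longrightarrow> bounded_measurable M a"
  unfolding unit_ball_def by (auto intro: bounded_measurableI)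

lemma unit_ball_glue:
  fixes f :: "'a \<Rightarrow> nat"
  assumes f: "f \<in> measurable M (count_space UNIV)" and a: "\<And>k. a k \<in> unit_ball M"
  shows "(\<lambda>\<omega>. a (f \<omega>) \<omega>) \<in> unit_ball M"
proof -
  have "a k \<in> borel_measurable M" for k using a unfolding unit_ball_def by auto
  then have "(\<lambda>\<omega>. a (f \<omega>) \<omega>) \<in> borel_measurable M" by (rule measurable_compose_countable[OF _ f])
  with a show ?thesis unfolding unit_ball_def by auto
qed

lemma bounded_measurable_add:
  assumes "bounded_measurable M x" "bounded_measurable M y"
  shows "bounded_measurable M (\<lambda>\<omega>. x \<omega> + y \<omega>)"
proof -
  obtain C D where "\<forall>\<omega>\<in>space M. cmod (x \<omega>) \<le> C" "\<forall>\<omega>\<in>space M. cmod (y \<omega>) \<le> D"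
    "x \<in> borel_measurable M" "y \<in> borel_measurable M"
    using assms unfolding bounded_measurable_def by auto
  then show ?thesis
    by (intro bounded_measurableI[where C="C + D"])
      (auto intro!: order.trans[OF norm_triangle_ineq] add_mono)
qed

lemma bounded_measurable_mult:
  assumes "bounded_measurable M x" "bounded_measurable M y"
  shows "bounded_measurable M (\<lambda>\<omega>. x \<omega> * y \<omega>)"
proof -
  obtain C D where "\<forall>\<omega>\<in>space M. cmod (x \<omega>) \<le> C" "\<forall>\<omega>\<in>space M. cmod (y \<omega>) \<le> D"
    "x \<in> borel_measurable M" "y \<in> borel_measurable M"
    using assms unfolding bounded_measurable_def by auto
  then show ?thesis
    by (intro bounded_measurableI[where C="C * D"]) (auto simp: norm_mult intro: mult_mono')
qed

lemma bounded_measurable_in_orlicz: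
  assumes M: "finite_measure M" and \<phi>: "young_function \<phi>" and x: "bounded_measurable M x"
  shows "x \<in> orlicz M \<phi>"
proof -
  obtain C0 where xm: "x \<in> borel_measurable M" and C0: "\<forall>\<omega>\<in>space M. cmod (x \<omega>) \<le> C0"
    using x unfolding bounded_measurable_def by auto
  define C where "C = \<bar>C0\<bar>"
  have C: "\<forall>\<omega>\<in>space M. cmod (x \<omega>) \<le> C" "C \<ge> 0" using C0 unfolding C_def by force+
  obtain K where K: "K \<ge> 0" "\<And>t. 0 \<le> t \<Longrightarrow> t \<le> 1 \<Longrightarrow> 0 \<le> \<phi> t \<and> \<phi> t \<le> K * t"
    using young_function_le_linear[OF \<phi>] by blast
  define m where "m = measure M (space M)"
  have m: "m \<ge> 0" unfolding m_def by simp
  define n :: nat where "n = nat \<lceil>C + C * K * m\<rceil> + 1"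
  have n0: "n > 0" unfolding n_def by simp
  have CKm: "0 \<le> C * K * m" using C(2) K(1) m by simp
  have nC: "C \<le> real n" "C * K * m \<le> real n" unfolding n_def using C(2) CKm
    by (simp_all add: of_nat_nat) (smt (verit) le_of_int_ceiling)+
  have pointwise: "ennreal (\<phi> (cmod (x \<omega>) / real n)) \<le> ennreal (K * (C / real n))"
    if "\<omega> \<in> space M" for \<omega>
  proof -
    have t0: "0 \<le> cmod (x \<omega>) / real n" by simp
    have t1: "cmod (x \<omega>) / real n \<le> C / real n" using C that n0 by (simp add: divide_right_mono)
    have "C / real n \<le> 1" using nC n0 by simp
    with t1 have "cmod (x \<omega>) / real n \<le> 1" by linarith
    with K(2)[OF t0] have "\<phi> (cmod (x \<omega>) / real n) \<le> K * (cmod (x \<omega>) / real n)" by auto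
    also have "\<dots> \<le> K * (C / real n)" by (rule mult_left_mono[OF t1 K(1)])
    finally show ?thesis by (simp add: ennreal_leI)
  qed
  have "(\<integral>\<^sup>+ \<omega>. ennreal (\<phi> (cmod (x \<omega>) / real n)) \<partial>M) \<le> (\<integral>\<^sup>+ \<omega>. ennreal (K * (C / real n)) \<partial>M)"
    using pointwise by (intro nn_integral_mono) auto
  also have "\<dots> = ennreal (K * (C / real n)) * ennreal m"
    using finite_measure.emeasure_eq_measure[OF M] by (simp add: m_def)
  also have "\<dots> = ennreal ((C * K * m) / real n)"
    using C(2) K(1) m by (simp add: ennreal_mult[symmetric] mult.commute mult.left_commute)
  also have "\<dots> \<le> 1" using nC n0 by simp
  finally show ?thesis unfolding orlicz_def using xm n0 by auto
qed

lemma bounded_measurable_in_gen_arens: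
  "finite_measure M \<Longrightarrow> \<forall>\<phi>\<in>\<Lambda>. young_function \<phi> \<Longrightarrow> bounded_measurable M x \<Longrightarrow> x \<in> gen_arens M \<Lambda>"
  unfolding gen_arens_def by (auto intro: bounded_measurable_in_orlicz bounded_measurable_measurable)

definition gaussian_floor :: "nat \<Rightarrow> complex \<Rightarrow> complex" where
  "gaussian_floor m z = (of_int \<lfloor>real m * Re z\<rfloor> + \<i> * of_int \<lfloor>real m * Im z\<rfloor>) / of_nat m"

lemma norm_sub_gaussian_floor_le:
  assumes m: "m > 0"
  shows "cmod (z - gaussian_floor m z) \<le> 2 / real m"
proof -
  have part: "\<bar>t - of_int \<lfloor>real m * t\<rfloor> / real m\<bar> \<le> 1 / real m" for t :: real
  proof -
    have "t - of_int \<lfloor>real m * t\<rfloor> / real m = (real m * t - of_int \<lfloor>real m * t\<rfloor>) / real m"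
      using m by (simp add: field_simps)
    moreover have "0 \<le> real m * t - of_int \<lfloor>real m * t\<rfloor>" "real m * t - of_int \<lfloor>real m * t\<rfloor> \<le> 1"
      by linarith+
    ultimately show ?thesis using m by (simp add: divide_right_mono)
  qed
  have "Re (z - gaussian_floor m z) = Re z - of_int \<lfloor>real m * Re z\<rfloor> / real m"
    "Im (z - gaussian_floor m z) = Im z - of_int \<lfloor>real m * Im z\<rfloor> / real m"
    by (simp_all add: gaussian_floor_def)
  with part[of "Re z"] part[of "Im z"] cmod_le[of "z - gaussian_floor m z"] show ?thesis by simp
qed

lemma bounded_measurable_gaussian_floor:
  assumes a: "bounded_measurable M a" and m: "m > 0"
  shows "bounded_measurable M (\<lambda>\<omega>. gaussian_floor m (a \<omega>))"
proof -
  obtain C where am[measurable]: "a \<in> borel_measurable M" and C: "\<forall>\<omega>\<in>space M. cmod (a \<omega>) \<le> C"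
    using a unfolding bounded_measurable_def by auto
  have "(\<lambda>\<omega>. gaussian_floor m (a \<omega>)) \<in> borel_measurable M"
    unfolding gaussian_floor_def by measurable
  moreover have "cmod (gaussian_floor m (a \<omega>)) \<le> C + 2 / real m" if "\<omega> \<in> space M" for \<omega>
    using norm_triangle_ineq4[of "a \<omega>" "a \<omega> - gaussian_floor m (a \<omega>)"]
      norm_sub_gaussian_floor_le[OF m, of "a \<omega>"] C that by fastforce
  ultimately show ?thesis by (rule bounded_measurableI)
qed

section \<open>Exhaustion\<close>

lemma (in finite_measure) countable_union_closed_attains_SUP:
  assumes empty: "P {}" and sets: "\<And>E. P E \<Longrightarrow> E \<in> sets M"
    and UN: "\<And>E :: nat \<Rightarrow> 'a set. (\<And>k. P (E k)) \<Longrightarrow> P (\<Union>k. E k)"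
  obtains U where "P U" "\<And>F. P F \<Longrightarrow> measure M F \<le> measure M U"
proof -
  define \<sigma> where "\<sigma> = (SUP E\<in>Collect P. measure M E)"
  have ne: "Collect P \<noteq> {}" using empty by auto
  have bdd: "bdd_above (measure M ` Collect P)"
    by (rule bdd_aboveI[where M="measure M (space M)"]) (auto intro: bounded_measure sets)
  have "\<forall>k. \<exists>E. P E \<and> \<sigma> - 1 / real (Suc k) < measure M E"
  proof
    fix k
    have "\<sigma> - 1 / real (Suc k) < \<sigma>" by simp
    then show "\<exists>E. P E \<and> \<sigma> - 1 / real (Suc k) < measure M E"
      unfolding \<sigma>_def using less_cSUP_iff[OF ne bdd] by auto
  qed
  then obtain E where E: "\<And>k. P (E k)" "\<And>k. \<sigma> - 1 / real (Suc k) < measure M (E k)"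
    by metis
  define U where "U = (\<Union>k. E k)"
  have PU: "P U" unfolding U_def by (rule UN[OF E(1)])
  have U: "U \<in> sets M" by (rule sets[OF PU])
  have "\<sigma> \<le> measure M U"
  proof (rule ccontr)
    assume "\<not> \<sigma> \<le> measure M U"
    then obtain k :: nat where k: "1 / real (Suc k) < \<sigma> - measure M U"
      using nat_approx_posE[of "\<sigma> - measure M U"] by auto
    have "measure M (E k) \<le> measure M U" unfolding U_def using U[unfolded U_def]
      by (intro finite_measure_mono) auto
    with E(2)[of k] k show False by linarith
  qed
  moreover have "measure M F \<le> \<sigma>" if "P F" for F
    unfolding \<sigma>_def using that by (intro cSUP_upper[OF _ bdd]) auto
  ultimately show ?thesis using that PU by force
qed

lemma (in finite_measure) exists_maximal_set:
  assumes empty: "P {}" and sets: "\<And>E. P E \<Longrightarrow> E \<in> sets M"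
    and UN: "\<And>E :: nat \<Rightarrow> 'a set. (\<And>k. P (E k)) \<Longrightarrow> P (\<Union>k. E k)"
  obtains U where "P U" "\<And>F. P F \<Longrightarrow> F - U \<in> null_sets M"
proof -
  obtain U where PU: "P U" and U_max: "\<And>F. P F \<Longrightarrow> measure M F \<le> measure M U"
    using countable_union_closed_attains_SUP[OF empty sets UN] by blast
  have U: "U \<in> sets M" by (rule sets[OF PU])
  have "F - U \<in> null_sets M" if PF: "P F" for F
  proof -
    have F: "F \<in> sets M" by (rule sets[OF PF])
    have "P (\<Union>k::nat. if k = 0 then U else F)" by (rule UN) (use PU PF in auto)
    moreover have "(\<Union>k::nat. if k = 0 then U else F) = U \<union> (F - U)" by (auto split: if_splits)
    ultimately have "measure M (U \<union> (F - U)) \<le> measure M U" using U_max by metis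
    moreover have "measure M (U \<union> (F - U)) = measure M U + measure M (F - U)"
      using U F by (intro finite_measure_Union) auto
    ultimately have "measure M (F - U) \<le> 0" by linarith
    then show ?thesis using U F by (simp add: emeasure_eq_measure null_sets_def measure_le_0_iff)
  qed
  with PU that show ?thesis by blast
qed

section \<open>Derivations on algebras containing the bounded functions\<close>

locale derivation_over_bounded =
  fixes M :: "'a measure" and L :: "('a \<Rightarrow> complex) set"
    and \<delta> :: "('a \<Rightarrow> complex) \<Rightarrow> ('a \<Rightarrow> complex)"
  assumes L_measurable: "x \<in> L \<Longrightarrow> x \<in> borel_measurable M"
    and bounded_in_L: "bounded_measurable M x \<Longrightarrow> x \<in> L"
    and derivation: "additive_derivation M L \<delta>"
begin

lemma delta_in_L: "x \<in> L \<Longrightarrow> \<delta> x \<in> L"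
  using derivation unfolding additive_derivation_def by auto

lemma delta_add: "x \<in> L \<Longrightarrow> y \<in> L \<Longrightarrow> AE \<omega> in M. \<delta> (\<lambda>\<omega>. x \<omega> + y \<omega>) \<omega> = \<delta> x \<omega> + \<delta> y \<omega>"
  using derivation unfolding additive_derivation_def by auto

lemma delta_mult:
  "x \<in> L \<Longrightarrow> y \<in> L \<Longrightarrow> AE \<omega> in M. \<delta> (\<lambda>\<omega>. x \<omega> * y \<omega>) \<omega> = \<delta> x \<omega> * y \<omega> + x \<omega> * \<delta> y \<omega>"
  using derivation unfolding additive_derivation_def by auto

lemma const_in_L: "(\<lambda>_. c) \<in> L"
  by (rule bounded_in_L[OF bounded_measurable_const])

lemma delta_zero: "AE \<omega> in M. \<delta> (\<lambda>_. 0) \<omega> = 0"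
  using delta_add[OF const_in_L const_in_L, of 0 0] by simp

lemma delta_idempotent:
  assumes p: "p \<in> L" and p01: "\<And>\<omega>. p \<omega> = 0 \<or> p \<omega> = 1"
  shows "AE \<omega> in M. \<delta> p \<omega> = 0"
proof -
  have square: "(\<lambda>\<omega>. p \<omega> * p \<omega>) = p"
  proof
    show "p \<omega> * p \<omega> = p \<omega>" for \<omega> using p01[of \<omega>] by auto
  qed
  from delta_mult[OF p p] show ?thesis
  proof eventually_elim
    case (elim \<omega>)
    then have "\<delta> p \<omega> = \<delta> p \<omega> * p \<omega> + p \<omega> * \<delta> p \<omega>" by (simp add: square)
    then show ?case using p01[of \<omega>] by auto
  qed
qed

lemma delta_indicator_mult:
  assumes D: "D \<in> sets M" and y: "y \<in> L"
  shows "AE \<omega> in M. \<delta> (\<lambda>\<omega>. indicator D \<omega> * y \<omega>) \<omega> = indicator D \<omega> * \<delta> y \<omega>"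
proof -
  have D_L: "indicator D \<in> L" by (rule bounded_in_L[OF bounded_measurable_indicator[OF D]])
  have "AE \<omega> in M. \<delta> (indicator D) \<omega> = 0"
    by (rule delta_idempotent[OF D_L]) (auto simp: indicator_def)
  with delta_mult[OF D_L y] show ?thesis by eventually_elim simp
qed

lemma delta_local:
  assumes D: "D \<in> sets M" and x: "x \<in> L" and y: "y \<in> L" and eq: "\<And>\<omega>. \<omega> \<in> D \<Longrightarrow> x \<omega> = y \<omega>"
  shows "AE \<omega> in M. \<omega> \<in> D \<longrightarrow> \<delta> x \<omega> = \<delta> y \<omega>"
proof -
  have restrict: "(\<lambda>\<omega>. indicator D \<omega> * x \<omega>) = (\<lambda>\<omega>. indicator D \<omega> * y \<omega>)"
    using eq by (auto simp: indicator_def)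
  have "AE \<omega> in M. \<delta> (\<lambda>\<omega>. indicator D \<omega> * x \<omega>) \<omega> = indicator D \<omega> * \<delta> x \<omega>"
    by (rule delta_indicator_mult[OF D x])
  moreover have "AE \<omega> in M. \<delta> (\<lambda>\<omega>. indicator D \<omega> * x \<omega>) \<omega> = indicator D \<omega> * \<delta> y \<omega>"
    unfolding restrict by (rule delta_indicator_mult[OF D y])
  ultimately show ?thesis by eventually_elim (auto simp: indicator_def)
qed

lemma delta_uminus:
  assumes "x \<in> L" "(\<lambda>\<omega>. - x \<omega>) \<in> L"
  shows "AE \<omega> in M. \<delta> (\<lambda>\<omega>. - x \<omega>) \<omega> = - \<delta> x \<omega>"
proof -
  have sum: "(\<lambda>\<omega>. x \<omega> + - x \<omega>) = (\<lambda>_. 0)" by auto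
  from delta_add[OF assms] delta_zero show ?thesis
    unfolding sum by eventually_elim (metis add.commute add_eq_0_iff)
qed

lemma delta_of_nat_mult:
  assumes x: "bounded_measurable M x"
  shows "AE \<omega> in M. \<delta> (\<lambda>\<omega>. of_nat k * x \<omega>) \<omega> = of_nat k * \<delta> x \<omega>"
proof (induction k)
  case 0
  then show ?case using delta_zero by simp
next
  case (Suc k)
  have kx: "(\<lambda>\<omega>. of_nat k * x \<omega>) \<in> L"
    by (rule bounded_in_L[OF bounded_measurable_mult[OF bounded_measurable_const x]])
  have sum: "(\<lambda>\<omega>. of_nat (Suc k) * x \<omega>) = (\<lambda>\<omega>. (\<lambda>\<omega>. of_nat k * x \<omega>) \<omega> + x \<omega>)"
    by (auto simp: algebra_simps)
  from delta_add[OF kx bounded_in_L[OF x]] Suc show ?case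
    unfolding sum by eventually_elim (simp add: algebra_simps)
qed

definition annihilated_constants :: "complex set" where
  "annihilated_constants = {c. AE \<omega> in M. \<delta> (\<lambda>_. c) \<omega> = 0}"

lemma annihilated_constantsI: "AE \<omega> in M. \<delta> (\<lambda>_. c) \<omega> = 0 \<Longrightarrow> c \<in> annihilated_constants"
  and annihilated_constantsD: "c \<in> annihilated_constants \<Longrightarrow> AE \<omega> in M. \<delta> (\<lambda>_. c) \<omega> = 0"
  unfolding annihilated_constants_def by simp_all

lemma one_annihilated: "1 \<in> annihilated_constants"
  by (intro annihilated_constantsI delta_idempotent const_in_L) simp

lemma add_annihilated:
  assumes "c \<in> annihilated_constants" "d \<in> annihilated_constants"
  shows "c + d \<in> annihilated_constants"
proof (rule annihilated_constantsI)
  from delta_add[OF const_in_L const_in_L, of c d] assms[THEN annihilated_constantsD]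
  show "AE \<omega> in M. \<delta> (\<lambda>_. c + d) \<omega> = 0" by eventually_elim simp
qed

lemma mult_annihilated:
  assumes "c \<in> annihilated_constants" "d \<in> annihilated_constants"
  shows "c * d \<in> annihilated_constants"
proof (rule annihilated_constantsI)
  from delta_mult[OF const_in_L const_in_L, of c d] assms[THEN annihilated_constantsD]
  show "AE \<omega> in M. \<delta> (\<lambda>_. c * d) \<omega> = 0" by eventually_elim simp
qed

lemma uminus_annihilated:
  assumes "c \<in> annihilated_constants"
  shows "- c \<in> annihilated_constants"
proof (rule annihilated_constantsI)
  from delta_uminus[OF const_in_L const_in_L, of c] annihilated_constantsD[OF assms]
  show "AE \<omega> in M. \<delta> (\<lambda>_. - c) \<omega> = 0" by eventually_elim simp
qed

lemma divide_of_nat_annihilated: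
  assumes c: "c \<in> annihilated_constants" and m: "m > 0"
  shows "c / of_nat m \<in> annihilated_constants"
proof -
  have prod: "(\<lambda>\<omega>. of_nat m * (\<lambda>_. c / of_nat m) \<omega>) = (\<lambda>_. c)" using m by auto
  from delta_of_nat_mult[OF bounded_measurable_const, of m "c / of_nat m"] annihilated_constantsD[OF c]
  have "AE \<omega> in M. \<delta> (\<lambda>_. c / of_nat m) \<omega> = 0"
    unfolding prod by eventually_elim (use m in simp)
  then show ?thesis by (rule annihilated_constantsI)
qed

lemma of_int_annihilated: "of_int j \<in> annihilated_constants"
proof -
  have "of_nat k \<in> annihilated_constants" for k
    by (induction k) (auto intro: annihilated_constantsI delta_zero add_annihilated one_annihilated)
  then show ?thesis
    by (cases j rule: int_cases) (auto intro: uminus_annihilated simp del: of_nat_Suc)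
qed

lemma imaginary_unit_annihilated: "\<i> \<in> annihilated_constants"
proof -
  have "\<i> * \<i> \<in> annihilated_constants" using uminus_annihilated[OF one_annihilated] by simp
  from delta_mult[OF const_in_L const_in_L, of \<i> \<i>] annihilated_constantsD[OF this]
  have "AE \<omega> in M. \<delta> (\<lambda>_. \<i>) \<omega> = 0"
  proof eventually_elim
    case (elim \<omega>)
    then have "2 * \<i> * \<delta> (\<lambda>_. \<i>) \<omega> = 0" by (simp add: algebra_simps)
    then show ?case by simp
  qed
  then show ?thesis by (rule annihilated_constantsI)
qed

lemma gaussian_rational_annihilated:
  "m > 0 \<Longrightarrow> (of_int j + \<i> * of_int l) / of_nat m \<in> annihilated_constants"
  by (intro divide_of_nat_annihilated add_annihilated mult_annihilated of_int_annihilated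
      imaginary_unit_annihilated)

lemma delta_countable_valued:
  fixes g :: "'a \<Rightarrow> 'i::countable" and c :: "'i \<Rightarrow> complex"
  assumes s: "bounded_measurable M s" and g: "\<And>i. {\<omega>\<in>space M. g \<omega> = i} \<in> sets M"
    and c: "\<And>i. c i \<in> annihilated_constants" and s_eq: "\<And>\<omega>. \<omega> \<in> space M \<Longrightarrow> s \<omega> = c (g \<omega>)"
  shows "AE \<omega> in M. \<delta> s \<omega> = 0"
proof -
  have "AE \<omega> in M. g \<omega> = i \<longrightarrow> \<delta> s \<omega> = 0" for i
  proof -
    have "AE \<omega> in M. \<omega> \<in> {\<omega>\<in>space M. g \<omega> = i} \<longrightarrow> \<delta> s \<omega> = \<delta> (\<lambda>_. c i) \<omega>"
      by (rule delta_local[OF g bounded_in_L[OF s] const_in_L]) (simp add: s_eq)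
    with annihilated_constantsD[OF c, of i] AE_space show ?thesis by eventually_elim auto
  qed
  then have "AE \<omega> in M. \<forall>i. g \<omega> = i \<longrightarrow> \<delta> s \<omega> = 0"
    by (intro AE_all_countable[THEN iffD2] allI)
  then show ?thesis by eventually_elim simp
qed

lemma delta_gaussian_floor:
  assumes a: "bounded_measurable M a" and m: "m > 0"
  shows "AE \<omega> in M. \<delta> (\<lambda>\<omega>. gaussian_floor m (a \<omega>)) \<omega> = 0"
proof (rule delta_countable_valued[OF bounded_measurable_gaussian_floor[OF a m],
      where g="\<lambda>\<omega>. (\<lfloor>real m * Re (a \<omega>)\<rfloor>, \<lfloor>real m * Im (a \<omega>)\<rfloor>)"
        and c="\<lambda>(j, l). (of_int j + \<i> * of_int l) / of_nat m"])
  have [measurable]: "a \<in> borel_measurable M" by (rule bounded_measurable_measurable[OF a])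
  fix i :: "int \<times> int"
  show "{\<omega> \<in> space M. (\<lfloor>real m * Re (a \<omega>)\<rfloor>, \<lfloor>real m * Im (a \<omega>)\<rfloor>) = i} \<in> sets M"
    by (cases i) (simp, measurable)
  show "(case i of (j, l) \<Rightarrow> (of_int j + \<i> * of_int l) / of_nat m) \<in> annihilated_constants"
    using gaussian_rational_annihilated[OF m] by (cases i) simp
qed (simp add: gaussian_floor_def)

lemma delta_norm_le_divide_of_small:
  assumes bound: "\<And>a. a \<in> unit_ball M \<Longrightarrow> AE \<omega> in M. \<omega> \<in> B \<longrightarrow> cmod (\<delta> a \<omega>) \<le> r"
    and a: "bounded_measurable M a" and k: "k > 0"
    and a_small: "\<And>\<omega>. \<omega> \<in> space M \<Longrightarrow> cmod (a \<omega>) \<le> 1 / real k"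
  shows "AE \<omega> in M. \<omega> \<in> B \<longrightarrow> cmod (\<delta> a \<omega>) \<le> r / real k"
proof -
  have "(\<lambda>\<omega>. of_nat k * a \<omega>) \<in> unit_ball M"
    using a_small k bounded_measurable_measurable[OF a]
    by (auto simp: unit_ball_def norm_mult field_simps)
  from bound[OF this] delta_of_nat_mult[OF a, of k] show ?thesis
    by eventually_elim (use k in \<open>auto simp: norm_mult field_simps\<close>)
qed

lemma delta_norm_le_divide_Suc:
  assumes bound: "\<And>a. a \<in> unit_ball M \<Longrightarrow> AE \<omega> in M. \<omega> \<in> B \<longrightarrow> cmod (\<delta> a \<omega>) \<le> r"
    and a: "bounded_measurable M a"
  shows "AE \<omega> in M. \<omega> \<in> B \<longrightarrow> cmod (\<delta> a \<omega>) \<le> r / real (Suc k)"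
proof -
  have mesh: "2 * Suc k > 0" by simp
  define s where "s \<omega> = gaussian_floor (2 * Suc k) (a \<omega>)" for \<omega>
  have s: "bounded_measurable M s"
    unfolding s_def by (rule bounded_measurable_gaussian_floor[OF a mesh])
  have rest: "bounded_measurable M (\<lambda>\<omega>. a \<omega> - s \<omega>)"
    using bounded_measurable_add[OF a bounded_measurable_mult[OF bounded_measurable_const s],
        of "-1"] by simp
  have rest_small: "cmod (a \<omega> - s \<omega>) \<le> 1 / real (Suc k)" for \<omega>
  proof -
    have "cmod (a \<omega> - s \<omega>) \<le> 2 / real (2 * Suc k)"
      unfolding s_def by (rule norm_sub_gaussian_floor_le[OF mesh])
    also have "\<dots> = 1 / real (Suc k)" by (simp add: divide_simps)
    finally show ?thesis .
  qed
  have sum: "(\<lambda>\<omega>. s \<omega> + (a \<omega> - s \<omega>)) = a" by auto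
  have "AE \<omega> in M. \<omega> \<in> B \<longrightarrow> cmod (\<delta> (\<lambda>\<omega>. a \<omega> - s \<omega>) \<omega>) \<le> r / real (Suc k)"
    by (rule delta_norm_le_divide_of_small[OF _ rest zero_less_Suc rest_small]) (rule bound)
  with delta_add[OF bounded_in_L[OF s] bounded_in_L[OF rest]] delta_gaussian_floor[OF a mesh]
  show ?thesis unfolding sum s_def by eventually_elim simp
qed

lemma delta_vanishes_on_bounded:
  assumes bound: "\<And>a. a \<in> unit_ball M \<Longrightarrow> AE \<omega> in M. \<omega> \<in> B \<longrightarrow> cmod (\<delta> a \<omega>) \<le> r"
    and a: "bounded_measurable M a"
  shows "AE \<omega> in M. \<omega> \<in> B \<longrightarrow> \<delta> a \<omega> = 0"
proof -
  have "AE \<omega> in M. \<forall>k. \<omega> \<in> B \<longrightarrow> cmod (\<delta> a \<omega>) \<le> r / real (Suc k)"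
    by (intro AE_all_countable[THEN iffD2] allI delta_norm_le_divide_Suc[OF _ a]) (rule bound)
  then show ?thesis
  proof eventually_elim
    case (elim \<omega>)
    have "(\<lambda>k. r / real (Suc k)) \<longlonglongrightarrow> 0"
      using LIMSEQ_Suc[OF lim_const_over_n[of r]] by simp
    then have "\<omega> \<in> B \<Longrightarrow> cmod (\<delta> a \<omega>) \<le> 0"
      using elim by (intro LIMSEQ_le_const[where a="cmod (\<delta> a \<omega>)"]) auto
    then show ?case by simp
  qed
qed

lemma delta_vanishes_on_L:
  assumes bounded: "\<And>a. bounded_measurable M a \<Longrightarrow> AE \<omega> in M. \<omega> \<in> B \<longrightarrow> \<delta> a \<omega> = 0"
    and x: "x \<in> L"
  shows "AE \<omega> in M. \<omega> \<in> B \<longrightarrow> \<delta> x \<omega> = 0"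
proof -
  have [measurable]: "x \<in> borel_measurable M" by (rule L_measurable[OF x])
  have "AE \<omega> in M. \<omega> \<in> B \<and> cmod (x \<omega>) < real j \<longrightarrow> \<delta> x \<omega> = 0" for j
  proof -
    let ?E = "{\<omega>\<in>space M. cmod (x \<omega>) < real j}"
    have E: "?E \<in> sets M" by measurable
    have "bounded_measurable M (\<lambda>\<omega>. indicator ?E \<omega> * x \<omega>)"
      by (rule bounded_measurableI[where C="real j"]) (auto simp: indicator_def)
    from bounded[OF this] delta_indicator_mult[OF E x] AE_space show ?thesis
      by eventually_elim (auto simp: indicator_def)
  qed
  then have "AE \<omega> in M. \<forall>j. \<omega> \<in> B \<and> cmod (x \<omega>) < real j \<longrightarrow> \<delta> x \<omega> = 0"
    by (intro AE_all_countable[THEN iffD2] allI)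
  then show ?thesis
    by eventually_elim (meson reals_Archimedean2)
qed

definition large_on :: "nat \<Rightarrow> 'a set \<Rightarrow> bool" where
  "large_on n E \<longleftrightarrow> E \<in> sets M \<and> (\<exists>a\<in>unit_ball M. AE \<omega> in M. \<omega> \<in> E \<longrightarrow> real n \<le> cmod (\<delta> a \<omega>))"

lemma large_on_sets: "large_on n E \<Longrightarrow> E \<in> sets M"
  unfolding large_on_def by simp

lemma large_on_empty: "large_on n {}"
proof -
  have "(\<lambda>_. 0) \<in> unit_ball M" by (simp add: unit_ball_def)
  then show ?thesis unfolding large_on_def by auto
qed

lemma delta_glue:
  fixes f :: "'a \<Rightarrow> nat"
  assumes f: "f \<in> measurable M (count_space UNIV)" and a: "\<And>k. a k \<in> unit_ball M"
  shows "AE \<omega> in M. \<delta> (\<lambda>\<omega>. a (f \<omega>) \<omega>) \<omega> = \<delta> (a (f \<omega>)) \<omega>"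
proof -
  have glue_L: "(\<lambda>\<omega>. a (f \<omega>) \<omega>) \<in> L"
    by (rule bounded_in_L[OF unit_ball_bounded_measurable[OF unit_ball_glue[OF f a]]])
  have "AE \<omega> in M. f \<omega> = k \<longrightarrow> \<delta> (\<lambda>\<omega>. a (f \<omega>) \<omega>) \<omega> = \<delta> (a k) \<omega>" for k
  proof -
    have "{\<omega>\<in>space M. f \<omega> = k} \<in> sets M" using f by measurable
    then have "AE \<omega> in M. \<omega> \<in> {\<omega>\<in>space M. f \<omega> = k} \<longrightarrow> \<delta> (\<lambda>\<omega>. a (f \<omega>) \<omega>) \<omega> = \<delta> (a k) \<omega>"
      by (rule delta_local[OF _ glue_L bounded_in_L[OF unit_ball_bounded_measurable[OF a]]]) simp
    with AE_space show ?thesis by eventually_elim auto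
  qed
  then have "AE \<omega> in M. \<forall>k. f \<omega> = k \<longrightarrow> \<delta> (\<lambda>\<omega>. a (f \<omega>) \<omega>) \<omega> = \<delta> (a k) \<omega>"
    by (intro AE_all_countable[THEN iffD2] allI)
  then show ?thesis by eventually_elim simp
qed

lemma large_on_UN:
  assumes large: "\<And>k::nat. large_on n (E k)"
  shows "large_on n (\<Union>k. E k)"
proof -
  obtain a where a: "\<And>k. a k \<in> unit_ball M"
    and a_large: "\<And>k. AE \<omega> in M. \<omega> \<in> E k \<longrightarrow> real n \<le> cmod (\<delta> (a k) \<omega>)"
    using large unfolding large_on_def by metis
  have [measurable]: "E k \<in> sets M" for k by (rule large_on_sets[OF large])
  define f where "f \<omega> = (LEAST k. \<omega> \<in> E k)" for \<omega>
  have f: "f \<in> measurable M (count_space UNIV)"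
    unfolding f_def by (rule measurable_Least) simp
  have glue: "(\<lambda>\<omega>. a (f \<omega>) \<omega>) \<in> unit_ball M" by (rule unit_ball_glue[OF f a])
  have "AE \<omega> in M. \<delta> (\<lambda>\<omega>. a (f \<omega>) \<omega>) \<omega> = \<delta> (a (f \<omega>)) \<omega>" by (rule delta_glue[OF f a])
  moreover have "AE \<omega> in M. \<forall>k. \<omega> \<in> E k \<longrightarrow> real n \<le> cmod (\<delta> (a k) \<omega>)"
    by (intro AE_all_countable[THEN iffD2] allI a_large)
  ultimately have "AE \<omega> in M. \<omega> \<in> (\<Union>k. E k) \<longrightarrow> real n \<le> cmod (\<delta> (\<lambda>\<omega>. a (f \<omega>) \<omega>) \<omega>)"
  proof eventually_elim
    case (elim \<omega>)
    show ?case
    proof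
      assume "\<omega> \<in> (\<Union>k. E k)"
      then obtain k where "\<omega> \<in> E k" by blast
      then have "\<omega> \<in> E (f \<omega>)" unfolding f_def by (rule LeastI)
      with elim show "real n \<le> cmod (\<delta> (\<lambda>\<omega>. a (f \<omega>) \<omega>) \<omega>)" by metis
    qed
  qed
  then show ?thesis unfolding large_on_def using glue by auto
qed

lemma maximal_large_on_fixing:
  assumes U: "large_on n U" and maximal: "\<And>F. large_on n F \<Longrightarrow> F - U \<in> null_sets M"
  shows "U \<in> fixing_projs M L \<delta>"
proof -
  have [measurable]: "U \<in> sets M" by (rule large_on_sets[OF U])
  have bound: "AE \<omega> in M. \<omega> \<in> space M - U \<longrightarrow> cmod (\<delta> a \<omega>) \<le> real n"
    if a: "a \<in> unit_ball M" for a
  proof -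
    have [measurable]: "\<delta> a \<in> borel_measurable M"
      by (intro L_measurable delta_in_L bounded_in_L unit_ball_bounded_measurable a)
    let ?F = "{\<omega>\<in>space M. real n < cmod (\<delta> a \<omega>)}"
    have "?F \<in> sets M" by measurable
    then have "large_on n ?F" unfolding large_on_def by (intro conjI bexI[OF _ a] AE_I2) auto
    from AE_not_in[OF maximal[OF this]] show ?thesis by eventually_elim auto
  qed
  have "AE \<omega> in M. indicator U \<omega> * \<delta> x \<omega> = \<delta> x \<omega>" if x: "x \<in> L" for x
  proof -
    have "AE \<omega> in M. \<omega> \<in> space M - U \<longrightarrow> \<delta> x \<omega> = 0"
    proof (rule delta_vanishes_on_L[OF _ x])
      show "AE \<omega> in M. \<omega> \<in> space M - U \<longrightarrow> \<delta> a \<omega> = 0" if "bounded_measurable M a" for a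
        by (rule delta_vanishes_on_bounded[OF _ that]) (rule bound)
    qed
    with AE_space show ?thesis by eventually_elim (auto simp: indicator_def)
  qed
  then show ?thesis unfolding fixing_projs_def by simp
qed

lemma exists_unit_ball_seq_ge_on_support:
  assumes M: "finite_measure M" and z: "is_proj_inf M (fixing_projs M L \<delta>) z"
  obtains a where "\<And>n. a n \<in> unit_ball M"
    "\<And>n. AE \<omega> in M. real n * indicator z \<omega> \<le> cmod (\<delta> (a n) \<omega>)"
proof -
  have "\<exists>a. a \<in> unit_ball M \<and> (AE \<omega> in M. real n * indicator z \<omega> \<le> cmod (\<delta> a \<omega>))" for n
  proof -
    obtain U where U: "large_on n U" and maximal: "\<And>F. large_on n F \<Longrightarrow> F - U \<in> null_sets M"
      using finite_measure.exists_maximal_set[OF M, of "large_on n"]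
        large_on_empty large_on_sets large_on_UN by metis
    obtain a where a: "a \<in> unit_ball M"
      and a_large: "AE \<omega> in M. \<omega> \<in> U \<longrightarrow> real n \<le> cmod (\<delta> a \<omega>)"
      using U unfolding large_on_def by blast
    have "AE \<omega> in M. \<omega> \<in> z \<longrightarrow> \<omega> \<in> U"
      using z maximal_large_on_fixing[OF U maximal] unfolding is_proj_inf_def by blast
    with a_large have "AE \<omega> in M. real n * indicator z \<omega> \<le> cmod (\<delta> a \<omega>)"
      by eventually_elim (auto simp: indicator_def)
    with a show ?thesis by blast
  qed
  then obtain a where a: "\<forall>n. a n \<in> unit_ball M \<and>
      (AE \<omega> in M. real n * indicator z \<omega> \<le> cmod (\<delta> (a n) \<omega>))"
    by (metis choice)
  show ?thesis by (rule that) (use a in blast)+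
qed

end

theorem lemma3p2:
  fixes M :: "'a measure" and \<Lambda> :: "(real \<Rightarrow> real) set"
    and \<delta> :: "('a \<Rightarrow> complex) \<Rightarrow> ('a \<Rightarrow> complex)" and z :: "'a set"
  assumes "finite_measure M"
    and "quadratic_family \<Lambda>"
    and "additive_derivation M (gen_arens M \<Lambda>) \<delta>"
    and "\<exists>x\<in>gen_arens M \<Lambda>. \<not> (AE \<omega> in M. \<delta> x \<omega> = 0)"
    and "is_proj_inf M (fixing_projs M (gen_arens M \<Lambda>) \<delta>) z"
  shows "\<exists>a :: nat \<Rightarrow> 'a \<Rightarrow> complex. \<forall>n.
           a n \<in> borel_measurable M \<and> a n \<in> gen_arens M \<Lambda>
         \<and> (AE \<omega> in M. cmod (a n \<omega>) \<le> 1)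
         \<and> (AE \<omega> in M. real n * indicator z \<omega> \<le> cmod (\<delta> (a n) \<omega>))"
proof -
  have young: "\<forall>\<phi>\<in>\<Lambda>. young_function \<phi>"
    using assms(2) unfolding quadratic_family_def by blast
  interpret derivation_over_bounded M "gen_arens M \<Lambda>" \<delta>
  proof
    show "x \<in> gen_arens M \<Lambda> \<Longrightarrow> x \<in> borel_measurable M" for x by (simp add: gen_arens_def)
    show "bounded_measurable M x \<Longrightarrow> x \<in> gen_arens M \<Lambda>" for x
      by (rule bounded_measurable_in_gen_arens[OF assms(1) young])
  qed (rule assms(3))
  obtain a where a: "\<And>n. a n \<in> unit_ball M"
    and a_ge: "\<And>n. AE \<omega> in M. real n * indicator z \<omega> \<le> cmod (\<delta> (a n) \<omega>)"
    using exists_unit_ball_seq_ge_on_support[OF assms(1,5)] by blast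
  show ?thesis
  proof (intro exI allI conjI)
    fix n
    show "a n \<in> borel_measurable M" "AE \<omega> in M. cmod (a n \<omega>) \<le> 1"
      using a[of n] unfolding unit_ball_def by auto
    show "a n \<in> gen_arens M \<Lambda>" by (rule bounded_in_L[OF unit_ball_bounded_measurable[OF a]])
    show "AE \<omega> in M. real n * indicator z \<omega> \<le> cmod (\<delta> (a n) \<omega>)" by (rule a_ge)
  qed
qed

end
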